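(* Let $N\ge 2$ and consider $N$ agents with discrete-time double-integrator dynamics $$p_i^{(k+1)}=p_i^{(k)}+v_i^{(k)},\qquad v_i^{(k+1)}=v_i^{(k)}+u_i^{(k)},\qquad i=1,\dots,N,\ k=0,1,2,\dots,$$ with $p_i^{(k)},v_i^{(k)}\in\mathbb{R}$, under the control law $$u_i^{(k)}=\gamma_1\sum_{j=1}^N a_{ij}^{(k)}\big(p_j^{(k)}-p_i^{(k)}\big)+\gamma_2\sum_{j=1}^N a_{ij}^{(k)}\big(v_j^{(k)}-v_i^{(k)}\big),$$ where for each $k$ the matrix $\mathcal{A}^{(k)}=(a_{ij}^{(k)})$ is a real symmetric $N\times N$ matrix with nonnegative entries and zero diagonal. Equivalently, with $x^{(k)}=((p^{(k)})^\top,(v^{(k)})^\top)^\top$, $x^{(k+1)}=F^{(k)}x^{(k)}$ where $F^{(k)}=\begin{pmatrix} I_N & I_N\\ -\gamma_1L^{(k)} & I_N-\gamma_2L^{(k)}\end{pmatrix}$ and $L^{(k)}$ is the Laplacian of $\mathcal{A}^{(k)}$. Assume the undirected graph with adjacency matrix $\mathcal{A}^{(0)}$ is connected, and that $$\gamma_2>\gamma_1>0,\qquad \gamma_1-2\gamma_2>-\frac{4}{\mu_i^{(0)}}\ \text{ for every nonzero eigenvalue }\mu_i^{(0)}\text{ of }L^{(0)}.$$ Then there exists $\delta_A>0$ such that, whenever $\|\mathcal{A}^{(k)}-\mathcal{A}^{(0)}\|_{\max}<\delta_A$ for all $k\ge 0$ (where $\|M\|_{\max}=\max_{i,j}|M_{ij}|$),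 the agents reach consensus for every initial condition, i.e. $\lim_{k\to\infty}(p_i^{(k)}-p_j^{(k)})=0$ and $\lim_{k\to\infty}(v_i^{(k)}-v_j^{(k)})=0$ for all $i,j$.
   Context: The Laplacian $L=(l_{ij})$ of a symmetric nonnegative matrix $\mathcal{A}=(a_{ij})$ with zero diagonal is defined by $l_{ij}=-a_{ij}$ for $i\ne j$ and $l_{ii}=\sum_{j\ne i}a_{ij}$. The graph associated with $\mathcal{A}$ has an edge between $i$ and $j$ iff $a_{ij}>0$. The sampling time is normalized to $1$. *)

theory Defs
  imports "HOL-Analysis.Analysis"
begin

definition adj_matrix :: "real^'n^'n \<Rightarrow> bool" where
  "adj_matrix A \<longleftrightarrow> (\<forall>i j. A $ i $ j = A $ j $ i) \<and> (\<forall>i j. 0 \<le> A $ i $ j) \<and> (\<forall>i. A $ i $ i = 0)"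

definition laplacian :: "real^'n^'n \<Rightarrow> real^'n^'n" where
  "laplacian A = (\<chi> i j. if i = j then (\<Sum>k\<in>UNIV - {i}. A $ i $ k) else - A $ i $ j)"

definition graph_connected :: "real^'n^'n \<Rightarrow> bool" where
  "graph_connected A \<longleftrightarrow> (\<forall>i j. (\<lambda>x y. A $ x $ y > 0)\<^sup>*\<^sup>* i j)"

definition max_norm :: "real^'n^'n \<Rightarrow> real" where
  "max_norm M = Max {\<bar>M $ i $ j\<bar> | i j. True}"

definition is_eigenvalue :: "real^'n^'n \<Rightarrow> real \<Rightarrow> bool" where
  "is_eigenvalue M \<mu> \<longleftrightarrow> (\<exists>x. x \<noteq> 0 \<and> M *v x = \<mu> *\<^sub>R x)"

end

theory Submission
  imports Defs
begin

text \<open>Consensus means that the centred states \<open>P = p - mean p\<close>, \<open>Q = v - mean v\<close> tend to zero;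
  they live in the zero-sum subspace, which is invariant under every Laplacian. There the nominal
  Laplacian \<open>L\<^sub>0\<close> is symmetric with positive eigenvalues \<open>\<mu>\<close> (the graph is connected), and in an
  orthonormal eigenbasis the nominal closed loop decouples into scalar systems
  \<open>(p, v) \<mapsto> (p + v, - \<gamma>\<^sub>1 \<mu> p + (1 - \<gamma>\<^sub>2 \<mu>) v)\<close>. The gain condition makes each of them Schur
  stable, so each has a quadratic Lyapunov function, and their sum \<open>V\<close> decreases by at least
  \<open>c (|P|\<^sup>2 + |Q|\<^sup>2)\<close> per step. Since \<open>V\<close> is quadratic, replacing \<open>L\<^sub>0\<close> by a Laplacian
  \<open>\<delta>\<close>-close to it costs only \<open>O(\<delta>) (|P| + |Q|)\<^sup>2\<close>, so for small \<open>\<delta>\<close> the decrease \<open>c/2 (|P|\<^sup>2 + |Q|\<^sup>2)\<close>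
  survives for every switching sequence; these decrements are summable, hence \<open>P, Q \<longrightarrow> 0\<close>.\<close>

lemma symmetric_operator_unit_eigenvector:
  fixes f :: "'a::euclidean_space \<Rightarrow> 'a"
  assumes lin: "linear f" and sym: "\<And>x y. f x \<bullet> y = x \<bullet> f y"
    and S: "subspace S" and inv: "\<And>x. x \<in> S \<Longrightarrow> f x \<in> S" and ne: "S \<noteq> {0}"
  shows "\<exists>u\<in>S. norm u = 1 \<and> f u = (u \<bullet> f u) *\<^sub>R u"
proof -
  let ?K = "S \<inter> sphere 0 1"
  have cK: "compact ?K" using closed_subspace[OF S] compact_sphere by (rule closed_Int_compact)
  obtain x where x: "x \<in> S" "x \<noteq> 0" using ne subspace_0[OF S] by blast
  have "x /\<^sub>R norm x \<in> ?K" using x S by (simp add: subspace_scale)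
  then have neK: "?K \<noteq> {}" by blast
  have cf: "continuous_on ?K f" using lin by (simp add: linear_continuous_on linear_conv_bounded_linear)
  have "continuous_on ?K (\<lambda>x. x \<bullet> f x)" by (intro continuous_intros cf)
  then obtain u where uK: "u \<in> ?K" and umax: "\<And>y. y \<in> ?K \<Longrightarrow> y \<bullet> f y \<le> u \<bullet> f u"
    using continuous_attains_sup[OF cK neK] by blast
  define m where "m = u \<bullet> f u"
  have uS: "u \<in> S" and un: "norm u = 1" using uK by auto
  have uu: "u \<bullet> u = 1" using un by (simp add: norm_eq_1)
  have rayleigh: "y \<bullet> f y \<le> m * (y \<bullet> y)" if yS: "y \<in> S" for y
  proof (cases "y = 0")
    case True then show ?thesis using lin by (simp add: linear_0)
  next
    case False
    let ?y = "y /\<^sub>R norm y"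
    have "?y \<in> ?K" using yS False S by (simp add: subspace_scale)
    then have "?y \<bullet> f ?y \<le> m" using umax m_def by blast
    moreover have "?y \<bullet> f ?y = (y \<bullet> f y) / (norm y)^2"
      using lin by (simp add: linear_scale power2_eq_square divide_inverse)
    moreover have "y \<bullet> y = (norm y)^2" by (simp add: power2_norm_eq_inner)
    moreover have "(norm y)^2 > 0" using False by simp
    ultimately show ?thesis by (simp add: divide_le_eq mult.commute)
  qed
  text \<open>\<open>u\<close> maximises the Rayleigh quotient on \<open>S\<close>, so its first variation \<open>2 t (w \<bullet> w)\<close> in the
    direction \<open>w = f u - m u\<close> must vanish.\<close>
  define w where "w = f u - m *\<^sub>R u"
  have wS: "w \<in> S" unfolding w_def using uS inv S by (simp add: subspace_diff subspace_scale)
  define c where "c = w \<bullet> f w - m * (w \<bullet> w)"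
  have variation: "2 * t * (w \<bullet> w) + t^2 * c \<le> 0" for t
  proof -
    have "(u + t *\<^sub>R w) \<bullet> f (u + t *\<^sub>R w) \<le> m * ((u + t *\<^sub>R w) \<bullet> (u + t *\<^sub>R w))"
      using rayleigh wS uS S by (simp add: subspace_add subspace_scale)
    moreover have "f (u + t *\<^sub>R w) = f u + t *\<^sub>R f w" using lin by (simp add: linear_add linear_scale)
    moreover have "u \<bullet> f w = w \<bullet> f u" using sym[of u w] by (simp add: inner_commute)
    moreover have "w \<bullet> f u - m * (w \<bullet> u) = w \<bullet> w" unfolding w_def
      by (simp add: inner_diff_right inner_diff_left inner_commute algebra_simps)
    ultimately show ?thesis using uu unfolding c_def m_def
      by (simp add: inner_add_left inner_add_right inner_commute power2_eq_square algebra_simps)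
  qed
  have "w = 0"
  proof (rule ccontr)
    assume "w \<noteq> 0"
    then have W: "w \<bullet> w > 0" by simp
    define t where "t = (w \<bullet> w) / (\<bar>c\<bar> + 1)"
    have t: "t > 0" using W by (simp add: t_def)
    have tc: "t * \<bar>c\<bar> < w \<bullet> w" unfolding t_def using W by (simp add: divide_simps)
    have "t * (2 * (w \<bullet> w) + t * c) \<le> 0"
      using variation[of t] by (simp add: power2_eq_square algebra_simps)
    then have "2 * (w \<bullet> w) + t * c \<le> 0" using t by (simp add: mult_le_0_iff)
    moreover have "t * c \<ge> - (t * \<bar>c\<bar>)" using t by (simp add: abs_if)
    ultimately show False using tc W by linarith
  qed
  then have "f u = m *\<^sub>R u" by (simp add: w_def)
  then show ?thesis using uS un m_def by blast
qed

lemma symmetric_operator_eigen_expansion: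
  fixes f :: "'a::euclidean_space \<Rightarrow> 'a"
  assumes lin: "linear f" and sym: "\<And>x y. f x \<bullet> y = x \<bullet> f y"
  shows "subspace S \<Longrightarrow> (\<And>x. x \<in> S \<Longrightarrow> f x \<in> S) \<Longrightarrow>
     \<exists>B. finite B \<and> B \<subseteq> S - {0} \<and> (\<forall>u\<in>B. \<exists>\<mu>. f u = \<mu> *\<^sub>R u) \<and> (\<forall>x\<in>S. x = (\<Sum>u\<in>B. (u \<bullet> x) *\<^sub>R u))"
proof (induction "dim S" arbitrary: S rule: less_induct)
  case less
  show ?case
  proof (cases "S = {0}")
    case True
    then show ?thesis by (intro exI[of _ "{}"]) auto
  next
    case False
    obtain u where uS: "u \<in> S" and un: "norm u = 1" and ue: "f u = (u \<bullet> f u) *\<^sub>R u"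
      using symmetric_operator_unit_eigenvector[OF lin sym less.prems(1) less.prems(2) False] by blast
    have uu: "u \<bullet> u = 1" using un by (simp add: norm_eq_1)
    define S' where "S' = {x \<in> S. u \<bullet> x = 0}"
    have sub': "subspace S'" using less.prems(1) unfolding S'_def subspace_def
      by (auto simp: inner_add_right)
    have inv': "f x \<in> S'" if "x \<in> S'" for x
    proof -
      have "u \<bullet> f x = f u \<bullet> x" using sym[of u x] by simp
      also have "\<dots> = (u \<bullet> f u) * (u \<bullet> x)" by (subst ue) simp
      finally show ?thesis using that less.prems(2) unfolding S'_def by auto
    qed
    have "u \<notin> S'" using uu unfolding S'_def by auto
    then have "S' \<subset> S" using uS unfolding S'_def by blast
    then have "dim S' < dim S"
      using dim_psubset span_eq_iff sub' less.prems(1) by metis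
    then obtain B where B: "finite B" "B \<subseteq> S' - {0}" "\<forall>u\<in>B. \<exists>\<mu>. f u = \<mu> *\<^sub>R u"
      "\<forall>x\<in>S'. x = (\<Sum>u\<in>B. (u \<bullet> x) *\<^sub>R u)"
      using less.hyps[OF _ sub' inv'] by blast
    have uB: "u \<notin> B" using B(2) uu unfolding S'_def by auto
    have orth: "w \<bullet> u = 0" if "w \<in> B" for w using that B(2) unfolding S'_def by (auto simp: inner_commute)
    show ?thesis
    proof (intro exI[of _ "insert u B"] conjI ballI)
      show "finite (insert u B)" using B(1) by simp
      show "insert u B \<subseteq> S - {0}" using B(2) uS un unfolding S'_def by auto
      show "\<exists>\<mu>. f w = \<mu> *\<^sub>R w" if "w \<in> insert u B" for w using that ue B(3) by blast
      fix x assume xS: "x \<in> S"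
      define x' where "x' = x - (u \<bullet> x) *\<^sub>R u"
      have "x' \<in> S'" unfolding S'_def x'_def using xS uS less.prems(1) uu
        by (simp add: subspace_diff subspace_scale inner_diff_right)
      then have "x' = (\<Sum>w\<in>B. (w \<bullet> x') *\<^sub>R w)" using B(4) by blast
      also have "\<dots> = (\<Sum>w\<in>B. (w \<bullet> x) *\<^sub>R w)"
        by (rule sum.cong) (auto simp: x'_def inner_diff_right orth)
      finally have "x = (u \<bullet> x) *\<^sub>R u + (\<Sum>w\<in>B. (w \<bullet> x) *\<^sub>R w)" unfolding x'_def
        by (simp add: algebra_simps)
      then show "x = (\<Sum>w\<in>insert u B. (w \<bullet> x) *\<^sub>R w)" using B(1) uB by simp
    qed
  qed
qed

lemma inner_self_eq_sum_of_expansion: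
  assumes "x = (\<Sum>u\<in>B. (u \<bullet> x) *\<^sub>R u)"
  shows "x \<bullet> x = (\<Sum>u\<in>B. (u \<bullet> x)^2)"
proof -
  have "x \<bullet> x = x \<bullet> (\<Sum>u\<in>B. (u \<bullet> x) *\<^sub>R u)" using assms by simp
  also have "\<dots> = (\<Sum>u\<in>B. (u \<bullet> x)^2)"
    by (simp add: inner_sum_right inner_commute power2_eq_square)
  finally show ?thesis .
qed

definition quad_form :: "real \<Rightarrow> real \<Rightarrow> real \<Rightarrow> real \<Rightarrow> real" where
  "quad_form a b p v = a * p^2 + 2 * b * p * v + v^2"

lemma double_integrator_quadratic_lyapunov:
  fixes g h :: real
  assumes g: "0 < g" and gh: "g < h" and st: "2 * h - g < 4"
  shows "\<exists>a b c. c > 0 \<and> (\<forall>p v. 0 \<le> quad_form a b p v) \<and>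
    (\<forall>p v. quad_form a b (p + v) (- g * p + (1 - h) * v) \<le> quad_form a b p v - c * (p^2 + v^2))"
proof -
  define D where "D = 2 - h + g"
  define N where "N = h * (2 - h) - g * (1 - h)"
  have D: "D > 0" using st g unfolding D_def by linarith
  have "N - g * D / 2 = (h - g) * (4 - 2 * h + g) / 2" unfolding N_def D_def by (simp add: field_simps)
  also have "\<dots> > 0" using gh st by simp
  finally have "N - g * D / 2 > 0" .
  then have gap: "N / D - g / 2 > 0" using D by (simp add: field_simps)
  define t where "t = min h ((N / D - g / 2) / 2)"
  have "t \<le> (N / D - g / 2) / 2" unfolding t_def by (rule min.cobounded2)
  then have t: "0 < t" "t \<le> h" "g / 2 + t < N / D" using gap gh g by (auto simp: t_def)
  define b where "b = g / 2 + t"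
  define a where "a = b * (h + g) + g * (1 - h)"
  text \<open>This \<open>a\<close> cancels the cross term \<open>p v\<close> in the decrease, which becomes
    \<open>2 g t p\<^sup>2 + (N - b D) v\<^sup>2\<close>; the gain condition is exactly what leaves room for \<open>g/2 < b < N/D\<close>.\<close>
  define c where "c = min (2 * g * t) (N - b * D)"
  have "N - b * D > 0" using t(3) D unfolding b_def by (simp add: field_simps)
  then have c0: "c > 0" unfolding c_def using g t by simp
  have "a - b^2 = g * (4 + g - 2 * h) / 4 + t * (h - t)" unfolding a_def b_def
    by (simp add: power2_eq_square field_simps)
  then have det: "a - b^2 \<ge> 0" using g st t by simp
  have "0 \<le> quad_form a b p v" for p v
  proof -
    have "quad_form a b p v = (v + b * p)^2 + (a - b^2) * p^2"
      by (simp add: quad_form_def power2_eq_square algebra_simps)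
    then show ?thesis using det by simp
  qed
  moreover have "quad_form a b (p + v) (- g * p + (1 - h) * v) \<le> quad_form a b p v - c * (p^2 + v^2)"
    for p v
  proof -
    have "quad_form a b p v - quad_form a b (p + v) (- g * p + (1 - h) * v)
        = (2 * g * t) * p^2 + (N - b * D) * v^2"
      unfolding quad_form_def a_def N_def D_def b_def by (simp add: power2_eq_square field_simps)
    moreover have "c * p^2 \<le> (2 * g * t) * p^2" "c * v^2 \<le> (N - b * D) * v^2"
      unfolding c_def by (auto intro: mult_right_mono)
    ultimately show ?thesis by (simp add: algebra_simps)
  qed
  ultimately show ?thesis using c0 by blast
qed

lemma quad_form_perturb:
  "\<bar>quad_form a b p (v + e) - quad_form a b p v\<bar> \<le> (2 * \<bar>b\<bar> + 2) * (\<bar>e\<bar> * (\<bar>p\<bar> + \<bar>v\<bar> + \<bar>e\<bar>))"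
proof -
  have "quad_form a b p (v + e) - quad_form a b p v = e * (2 * b * p + 2 * v + e)"
    by (simp add: quad_form_def power2_eq_square algebra_simps)
  moreover have "\<bar>2 * b * p + 2 * v + e\<bar> \<le> (2 * \<bar>b\<bar> + 2) * (\<bar>p\<bar> + \<bar>v\<bar> + \<bar>e\<bar>)"
    by (simp add: abs_mult algebra_simps abs_triangle_ineq order_trans[OF abs_triangle_ineq]
        mult_nonneg_nonneg add_mono)
  ultimately show ?thesis by (simp add: abs_mult mult_left_mono mult.left_commute)
qed

lemma sum_quad_form_perturb:
  fixes B :: "'a::real_inner set"
  shows "\<bar>(\<Sum>u\<in>B. quad_form (a u) (b u) (u \<bullet> p) (u \<bullet> (v + e)))
           - (\<Sum>u\<in>B. quad_form (a u) (b u) (u \<bullet> p) (u \<bullet> v))\<bar>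
       \<le> (\<Sum>u\<in>B. (2 * \<bar>b u\<bar> + 2) * (norm u)^2) * (norm e * (norm p + norm v + norm e))"
proof -
  have termwise: "\<bar>quad_form (a u) (b u) (u \<bullet> p) (u \<bullet> (v + e)) - quad_form (a u) (b u) (u \<bullet> p) (u \<bullet> v)\<bar>
      \<le> (2 * \<bar>b u\<bar> + 2) * (norm u)^2 * (norm e * (norm p + norm v + norm e))" for u
  proof -
    have "\<bar>u \<bullet> e\<bar> * (\<bar>u \<bullet> p\<bar> + \<bar>u \<bullet> v\<bar> + \<bar>u \<bullet> e\<bar>)
        \<le> (norm u * norm e) * (norm u * norm p + norm u * norm v + norm u * norm e)"
      by (intro mult_mono add_mono Cauchy_Schwarz_ineq2) auto
    also have "\<dots> = (norm u)^2 * (norm e * (norm p + norm v + norm e))"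
      by (simp add: power2_eq_square algebra_simps)
    finally have "(2 * \<bar>b u\<bar> + 2) * (\<bar>u \<bullet> e\<bar> * (\<bar>u \<bullet> p\<bar> + \<bar>u \<bullet> v\<bar> + \<bar>u \<bullet> e\<bar>))
        \<le> (2 * \<bar>b u\<bar> + 2) * ((norm u)^2 * (norm e * (norm p + norm v + norm e)))"
      by (rule mult_left_mono) simp
    then show ?thesis
      using quad_form_perturb[of "a u" "b u" "u \<bullet> p" "u \<bullet> v" "u \<bullet> e"]
      by (simp add: inner_add_right mult.assoc)
  qed
  have "\<bar>(\<Sum>u\<in>B. quad_form (a u) (b u) (u \<bullet> p) (u \<bullet> (v + e)))
           - (\<Sum>u\<in>B. quad_form (a u) (b u) (u \<bullet> p) (u \<bullet> v))\<bar>
      \<le> (\<Sum>u\<in>B. \<bar>quad_form (a u) (b u) (u \<bullet> p) (u \<bullet> (v + e)) - quad_form (a u) (b u) (u \<bullet> p) (u \<bullet> v)\<bar>)"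
    unfolding sum_subtractf[symmetric] by (rule sum_abs)
  also have "\<dots> \<le> (\<Sum>u\<in>B. (2 * \<bar>b u\<bar> + 2) * (norm u)^2 * (norm e * (norm p + norm v + norm e)))"
    by (rule sum_mono) (rule termwise)
  finally show ?thesis by (simp add: sum_distrib_right)
qed

lemma symmetric_operator_lyapunov:
  fixes f :: "'a::euclidean_space \<Rightarrow> 'a" and \<gamma>1 \<gamma>2 :: real
  assumes lin: "linear f" and sym: "\<And>x y. f x \<bullet> y = x \<bullet> f y"
    and S: "subspace S" and inv: "\<And>x. x \<in> S \<Longrightarrow> f x \<in> S"
    and stable: "\<And>u \<mu>. u \<in> S \<Longrightarrow> u \<noteq> 0 \<Longrightarrow> f u = \<mu> *\<^sub>R u \<Longrightarrow>
      0 < \<gamma>1 * \<mu> \<and> \<gamma>1 * \<mu> < \<gamma>2 * \<mu> \<and> 2 * (\<gamma>2 * \<mu>) - \<gamma>1 * \<mu> < 4"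
  shows "\<exists>V c K. c > 0 \<and> K \<ge> 0 \<and> (\<forall>p v. 0 \<le> V p v)
    \<and> (\<forall>p\<in>S. \<forall>v\<in>S. V (p + v) (v - \<gamma>1 *\<^sub>R f p - \<gamma>2 *\<^sub>R f v) \<le> V p v - c * (p \<bullet> p + v \<bullet> v))
    \<and> (\<forall>p v e. \<bar>V p (v + e) - V p v\<bar> \<le> K * (norm e * (norm p + norm v + norm e)))"
proof -
  obtain B where B: "finite B" "B \<subseteq> S - {0}" "\<forall>u\<in>B. \<exists>\<mu>. f u = \<mu> *\<^sub>R u"
    and expand: "\<forall>x\<in>S. x = (\<Sum>u\<in>B. (u \<bullet> x) *\<^sub>R u)"
    using symmetric_operator_eigen_expansion[OF lin sym S inv] by blast
  obtain \<mu> where \<mu>: "\<forall>u\<in>B. f u = \<mu> u *\<^sub>R u" using bchoice[OF B(3)] by blast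
  have "\<forall>u\<in>B. \<exists>a b c. c > 0 \<and> (\<forall>p v. 0 \<le> quad_form a b p v) \<and>
      (\<forall>p v. quad_form a b (p + v) (- (\<gamma>1 * \<mu> u) * p + (1 - \<gamma>2 * \<mu> u) * v)
               \<le> quad_form a b p v - c * (p^2 + v^2))"
    using B(2) \<mu> stable by (blast intro: double_integrator_quadratic_lyapunov)
  then obtain a b c where c: "\<And>u. u \<in> B \<Longrightarrow> c u > 0"
    and nonneg: "\<And>u p v. u \<in> B \<Longrightarrow> 0 \<le> quad_form (a u) (b u) p v"
    and decr: "\<And>u p v. u \<in> B \<Longrightarrow> quad_form (a u) (b u) (p + v) (- (\<gamma>1 * \<mu> u) * p + (1 - \<gamma>2 * \<mu> u) * v)
               \<le> quad_form (a u) (b u) p v - c u * (p^2 + v^2)"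
    by metis
  define cmin where "cmin = Min (insert 1 (c ` B))"
  have cmin: "cmin > 0" "\<And>u. u \<in> B \<Longrightarrow> cmin \<le> c u"
    unfolding cmin_def using B(1) c by auto
  define V where "V p v = (\<Sum>u\<in>B. quad_form (a u) (b u) (u \<bullet> p) (u \<bullet> v))" for p v :: 'a
  have "V (p + v) (v - \<gamma>1 *\<^sub>R f p - \<gamma>2 *\<^sub>R f v) \<le> V p v - cmin * (p \<bullet> p + v \<bullet> v)"
    if "p \<in> S" "v \<in> S" for p v
  proof -
    have "quad_form (a u) (b u) (u \<bullet> (p + v)) (u \<bullet> (v - \<gamma>1 *\<^sub>R f p - \<gamma>2 *\<^sub>R f v))
        \<le> quad_form (a u) (b u) (u \<bullet> p) (u \<bullet> v) - cmin * ((u \<bullet> p)^2 + (u \<bullet> v)^2)" if u: "u \<in> B" for u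
    proof -
      have eig: "u \<bullet> f x = \<mu> u * (u \<bullet> x)" for x using sym[of u x] \<mu> u by simp
      have "cmin * ((u \<bullet> p)^2 + (u \<bullet> v)^2) \<le> c u * ((u \<bullet> p)^2 + (u \<bullet> v)^2)"
        using cmin u by (intro mult_right_mono) auto
      then show ?thesis
        using decr[OF u, of "u \<bullet> p" "u \<bullet> v"] by (simp add: eig inner_diff_right inner_add_right algebra_simps)
    qed
    then have "V (p + v) (v - \<gamma>1 *\<^sub>R f p - \<gamma>2 *\<^sub>R f v)
        \<le> (\<Sum>u\<in>B. quad_form (a u) (b u) (u \<bullet> p) (u \<bullet> v) - cmin * ((u \<bullet> p)^2 + (u \<bullet> v)^2))"
      unfolding V_def by (rule sum_mono)
    also have "\<dots> = V p v - cmin * (p \<bullet> p + v \<bullet> v)"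
      using inner_self_eq_sum_of_expansion[of p B] inner_self_eq_sum_of_expansion[of v B] expand that
      by (simp add: V_def sum_subtractf sum.distrib distrib_left sum_distrib_left)
    finally show ?thesis .
  qed
  moreover have "\<bar>V p (v + e) - V p v\<bar> \<le> (\<Sum>u\<in>B. (2 * \<bar>b u\<bar> + 2) * (norm u)^2) * (norm e * (norm p + norm v + norm e))"
    for p v e unfolding V_def by (rule sum_quad_form_perturb)
  moreover have "0 \<le> V p v" for p v unfolding V_def using nonneg by (simp add: sum_nonneg)
  moreover have "0 \<le> (\<Sum>u\<in>B. (2 * \<bar>b u\<bar> + 2) * (norm u)^2)" by (intro sum_nonneg) simp
  ultimately show ?thesis using cmin(1) by blast
qed

definition lap :: "real^'n^'n \<Rightarrow> real^'n \<Rightarrow> real^'n" where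
  "lap A x = (\<chi> i. \<Sum>j\<in>UNIV. A $ i $ j * (x $ i - x $ j))"

lemma laplacian_mult_vec:
  assumes "adj_matrix A"
  shows "laplacian A *v x = lap A x"
proof -
  have diag: "A $ i $ i = 0" for i using assms by (simp add: adj_matrix_def)
  have "(laplacian A *v x) $ i = lap A x $ i" for i
  proof -
    have "(laplacian A *v x) $ i = laplacian A $ i $ i * x $ i + (\<Sum>j\<in>UNIV - {i}. laplacian A $ i $ j * x $ j)"
      by (simp add: matrix_vector_mult_def sum.remove)
    also have "\<dots> = (\<Sum>j\<in>UNIV - {i}. A $ i $ j) * x $ i + (\<Sum>j\<in>UNIV - {i}. - A $ i $ j * x $ j)"
      by (simp add: laplacian_def)
    also have "\<dots> = (\<Sum>j\<in>UNIV - {i}. A $ i $ j * (x $ i - x $ j))"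
      by (simp add: sum_distrib_right sum_distrib_left sum.distrib[symmetric] algebra_simps sum_negf)
    also have "\<dots> = lap A x $ i"
      by (simp add: lap_def sum.remove[of UNIV i "\<lambda>j. A $ i $ j * (x $ i - x $ j)"] diag)
    finally show ?thesis .
  qed
  then show ?thesis by (simp add: vec_eq_iff)
qed

lemma lap_linear: "linear (lap A)"
  by (rule linearI) (simp_all add: lap_def vec_eq_iff sum.distrib[symmetric] sum_distrib_left algebra_simps)

lemma lap_diff_left: "lap A x - lap B x = lap (A - B) x"
  by (simp add: lap_def vec_eq_iff sum_subtractf[symmetric] algebra_simps)

lemma lap_const: "lap A (\<chi> i. c) = 0"
  by (simp add: lap_def vec_eq_iff)

lemma lap_symmetric:
  assumes "adj_matrix A" shows "lap A x \<bullet> y = x \<bullet> lap A y"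
proof -
  have s: "\<And>i j. A$i$j = A$j$i" using assms by (simp add: adj_matrix_def)
  have "(\<Sum>i\<in>UNIV. \<Sum>j\<in>UNIV. A$i$j * x$j * y$i) = (\<Sum>j\<in>UNIV. \<Sum>i\<in>UNIV. A$i$j * x$j * y$i)"
    by (rule sum.swap)
  also have "\<dots> = (\<Sum>j\<in>UNIV. \<Sum>i\<in>UNIV. A$j$i * x$j * y$i)" using s by simp
  finally have sw: "(\<Sum>i\<in>UNIV. \<Sum>j\<in>UNIV. A$i$j * x$j * y$i) = (\<Sum>i\<in>UNIV. \<Sum>j\<in>UNIV. A$i$j * x$i * y$j)" .
  have "lap A x \<bullet> y = (\<Sum>i\<in>UNIV. \<Sum>j\<in>UNIV. A$i$j * x$i * y$i) - (\<Sum>i\<in>UNIV. \<Sum>j\<in>UNIV. A$i$j * x$j * y$i)"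
    by (simp add: lap_def inner_vec_def sum_distrib_right sum_distrib_left sum_subtractf[symmetric] algebra_simps)
  also have "\<dots> = (\<Sum>i\<in>UNIV. \<Sum>j\<in>UNIV. A$i$j * x$i * y$i) - (\<Sum>i\<in>UNIV. \<Sum>j\<in>UNIV. A$i$j * x$i * y$j)"
    by (simp only: sw)
  also have "\<dots> = x \<bullet> lap A y"
    by (simp add: lap_def inner_vec_def sum_distrib_right sum_distrib_left sum_subtractf[symmetric] algebra_simps)
  finally show ?thesis .
qed

lemma lap_quadratic_form:
  assumes "adj_matrix A"
  shows "2 * (x \<bullet> lap A x) = (\<Sum>i\<in>UNIV. \<Sum>j\<in>UNIV. A $ i $ j * (x $ i - x $ j)^2)"
proof -
  have s: "A $ i $ j = A $ j $ i" for i j using assms by (simp add: adj_matrix_def)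
  have "(\<Sum>i\<in>UNIV. \<Sum>j\<in>UNIV. A $ i $ j * x $ j * (x $ i - x $ j))
      = (\<Sum>j\<in>UNIV. \<Sum>i\<in>UNIV. A $ i $ j * x $ j * (x $ i - x $ j))"
    by (rule sum.swap)
  also have "\<dots> = (\<Sum>j\<in>UNIV. \<Sum>i\<in>UNIV. A $ j $ i * x $ j * (x $ i - x $ j))" using s by simp
  also have "\<dots> = - (x \<bullet> lap A x)"
    by (simp add: lap_def inner_vec_def sum_distrib_left sum_negf[symmetric] algebra_simps)
  finally have swap: "(\<Sum>i\<in>UNIV. \<Sum>j\<in>UNIV. A $ i $ j * x $ j * (x $ i - x $ j)) = - (x \<bullet> lap A x)" .
  have "(\<Sum>i\<in>UNIV. \<Sum>j\<in>UNIV. A $ i $ j * (x $ i - x $ j)^2)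
      = (\<Sum>i\<in>UNIV. \<Sum>j\<in>UNIV. A $ i $ j * x $ i * (x $ i - x $ j))
        - (\<Sum>i\<in>UNIV. \<Sum>j\<in>UNIV. A $ i $ j * x $ j * (x $ i - x $ j))"
    by (simp add: sum_subtractf[symmetric] power2_eq_square algebra_simps)
  also have "(\<Sum>i\<in>UNIV. \<Sum>j\<in>UNIV. A $ i $ j * x $ i * (x $ i - x $ j)) = x \<bullet> lap A x"
    by (simp add: lap_def inner_vec_def sum_distrib_left algebra_simps)
  finally show ?thesis using swap by simp
qed

lemma sum_lap_eq_0:
  assumes "adj_matrix A"
  shows "(\<Sum>i\<in>UNIV. lap A x $ i) = 0"
proof -
  have "(\<Sum>i\<in>UNIV. lap A x $ i) = lap A x \<bullet> (\<chi> i. 1)" by (simp add: inner_vec_def)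
  then show ?thesis by (simp add: lap_symmetric[OF assms] lap_const)
qed

lemma lap_quadratic_form_eq_0_imp_const:
  assumes A: "adj_matrix A" and conn: "graph_connected A" and "x \<bullet> lap A x = 0"
  shows "x $ i = x $ j"
proof -
  have nn: "0 \<le> A $ i $ j" for i j using A by (simp add: adj_matrix_def)
  have "(\<Sum>i\<in>UNIV. \<Sum>j\<in>UNIV. A $ i $ j * (x $ i - x $ j)^2) = 0"
    using lap_quadratic_form[OF A, of x] assms(3) by simp
  then have "\<forall>i\<in>UNIV. (\<Sum>j\<in>UNIV. A $ i $ j * (x $ i - x $ j)^2) = 0"
    by (subst (asm) sum_nonneg_eq_0_iff) (auto intro!: sum_nonneg simp: nn)
  then have z: "A $ a $ b * (x $ a - x $ b)^2 = 0" for a b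
    using sum_nonneg_eq_0_iff[of UNIV "\<lambda>j. A $ a $ j * (x $ a - x $ j)^2"] nn by auto
  have edge: "A $ a $ b > 0 \<Longrightarrow> x $ a = x $ b" for a b using z[of a b] by simp
  have "(\<lambda>a b. A $ a $ b > 0)\<^sup>*\<^sup>* i j" using conn by (simp add: graph_connected_def)
  then show ?thesis by (induction rule: rtranclp_induct) (auto dest: edge)
qed

definition zero_sum :: "(real^'n) set" where
  "zero_sum = {x. (\<Sum>i\<in>UNIV. x $ i) = 0}"

lemma subspace_zero_sum: "subspace zero_sum"
  unfolding zero_sum_def subspace_def by (simp add: sum.distrib sum_distrib_left[symmetric])

lemma lap_eigenvalue_pos:
  fixes u :: "real^'n"
  assumes A: "adj_matrix A" and conn: "graph_connected A"
    and u: "u \<in> zero_sum" "u \<noteq> 0" and eig: "lap A u = \<mu> *\<^sub>R u"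
  shows "\<mu> > 0"
proof -
  have q: "u \<bullet> lap A u = \<mu> * (u \<bullet> u)" using eig by simp
  have nn: "0 \<le> A $ i $ j" for i j using A by (simp add: adj_matrix_def)
  have "0 \<le> 2 * (u \<bullet> lap A u)" unfolding lap_quadratic_form[OF A]
    by (intro sum_nonneg mult_nonneg_nonneg nn) simp
  then have ge: "\<mu> * (u \<bullet> u) \<ge> 0" using q by simp
  have "\<mu> \<noteq> 0"
  proof
    assume "\<mu> = 0"
    then have const: "u $ i = u $ j" for i j
      using lap_quadratic_form_eq_0_imp_const[OF A conn] q by simp
    fix k :: 'n
    have "(\<Sum>i\<in>UNIV. u $ i) = (\<Sum>i\<in>(UNIV::'n set). u $ k)" by (rule sum.cong) (auto intro: const)
    then have "(\<Sum>i\<in>UNIV. u $ i) = real CARD('n) * u $ k" by simp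
    then have "u $ k = 0" using u(1) by (simp add: zero_sum_def)
    then have "u = 0" using const by (simp add: vec_eq_iff) metis
    with u(2) show False by simp
  qed
  moreover have "u \<bullet> u > 0" using u(2) by simp
  ultimately show ?thesis using ge mult_neg_pos[of \<mu> "u \<bullet> u"] by linarith
qed

lemma max_norm_entry: "\<bar>M $ i $ j\<bar> \<le> max_norm M"
proof -
  have "{\<bar>M $ i $ j\<bar> | i j. True} = (\<lambda>(i, j). \<bar>M $ i $ j\<bar>) ` UNIV" by auto
  then have "finite {\<bar>M $ i $ j\<bar> | i j. True}" by simp
  then show ?thesis unfolding max_norm_def by (rule Max_ge) blast
qed

lemma max_norm_nonneg: "0 \<le> max_norm M"
  using abs_ge_zero max_norm_entry by (rule order_trans)

lemma norm_lap_le: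
  fixes D :: "real^'n^'n"
  shows "norm (lap D y) \<le> 2 * real CARD('n)^2 * max_norm D * norm y"
proof -
  have comp: "\<bar>lap D y $ i\<bar> \<le> real CARD('n) * (2 * max_norm D * norm y)" for i
  proof -
    have "\<bar>lap D y $ i\<bar> \<le> (\<Sum>j\<in>UNIV. \<bar>D $ i $ j * (y $ i - y $ j)\<bar>)"
      unfolding lap_def by (simp add: sum_abs)
    also have "\<dots> \<le> (\<Sum>j\<in>(UNIV::'n set). max_norm D * (2 * norm y))"
    proof (intro sum_mono)
      fix j
      have "\<bar>y $ i - y $ j\<bar> \<le> 2 * norm y"
        using component_le_norm_cart[of y i] component_le_norm_cart[of y j] by linarith
      then show "\<bar>D $ i $ j * (y $ i - y $ j)\<bar> \<le> max_norm D * (2 * norm y)"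
        unfolding abs_mult by (intro mult_mono max_norm_entry max_norm_nonneg) auto
    qed
    finally show ?thesis by simp
  qed
  have "norm (lap D y) \<le> (\<Sum>i\<in>UNIV. \<bar>lap D y $ i\<bar>)" by (rule norm_le_l1_cart)
  also have "\<dots> \<le> (\<Sum>i\<in>(UNIV::'n set). real CARD('n) * (2 * max_norm D * norm y))"
    by (rule sum_mono) (rule comp)
  also have "\<dots> = 2 * real CARD('n)^2 * max_norm D * norm y" by (simp add: power2_eq_square)
  finally show ?thesis .
qed

lemma norm_lap_diff_le:
  fixes A B :: "real^'n^'n"
  assumes "max_norm (A - B) \<le> d"
  shows "norm (lap A x - lap B x) \<le> 2 * real CARD('n)^2 * d * norm x"
proof -
  have "norm (lap A x - lap B x) \<le> 2 * real CARD('n)^2 * max_norm (A - B) * norm x"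
    unfolding lap_diff_left by (rule norm_lap_le)
  also have "\<dots> \<le> 2 * real CARD('n)^2 * d * norm x"
    using assms by (intro mult_right_mono mult_left_mono) auto
  finally show ?thesis .
qed

definition center :: "real^'n \<Rightarrow> real^'n" where
  "center x = x - ((\<Sum>i\<in>UNIV. x $ i) / real CARD('n)) *\<^sub>R (\<chi> i. 1)"

lemma center_linear: "linear center"
  by (rule linearI)
    (simp_all add: center_def vec_eq_iff sum.distrib sum_distrib_left algebra_simps add_divide_distrib)

lemma center_in_zero_sum: "center x \<in> zero_sum"
  by (simp add: center_def zero_sum_def sum_subtractf)

lemma center_diff_component: "center x $ i - center x $ j = x $ i - x $ j"
  by (simp add: center_def)

lemma center_lap: "adj_matrix A \<Longrightarrow> center (lap A y) = lap A y"
  by (simp add: center_def sum_lap_eq_0)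

lemma lap_center: "lap A (center y) = lap A y"
  using lap_linear[of A] by (simp add: center_def linear_diff linear_scale lap_const)


lemma laplacian_consensus_lyapunov:
  fixes A0 :: "real^'n^'n"
  assumes A0: "adj_matrix A0" and conn: "graph_connected A0" and \<gamma>: "0 < \<gamma>1" "\<gamma>1 < \<gamma>2"
    and spec: "\<And>\<mu>. is_eigenvalue (laplacian A0) \<mu> \<Longrightarrow> \<mu> \<noteq> 0 \<Longrightarrow> \<gamma>1 - 2 * \<gamma>2 > - 4 / \<mu>"
  shows "\<exists>V c K. c > 0 \<and> K \<ge> 0 \<and> (\<forall>p v. 0 \<le> V p v)
    \<and> (\<forall>p\<in>zero_sum. \<forall>v\<in>zero_sum.
         V (p + v) (v - \<gamma>1 *\<^sub>R lap A0 p - \<gamma>2 *\<^sub>R lap A0 v) \<le> V p v - c * (p \<bullet> p + v \<bullet> v))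
    \<and> (\<forall>p v e. \<bar>V p (v + e) - V p v\<bar> \<le> K * (norm e * (norm p + norm v + norm e)))"
proof (rule symmetric_operator_lyapunov[OF lap_linear lap_symmetric[OF A0] subspace_zero_sum])
  show "lap A0 x \<in> zero_sum" for x by (simp add: zero_sum_def sum_lap_eq_0[OF A0])
next
  fix u :: "real^'n" and \<mu>
  assume u: "u \<in> zero_sum" "u \<noteq> 0" and eig: "lap A0 u = \<mu> *\<^sub>R u"
  have \<mu>: "\<mu> > 0" using lap_eigenvalue_pos[OF A0 conn u eig] .
  have "is_eigenvalue (laplacian A0) \<mu>"
    unfolding is_eigenvalue_def using u eig laplacian_mult_vec[OF A0] by auto
  then have "-4 / \<mu> < \<gamma>1 - 2 * \<gamma>2" using spec \<mu> by simp
  then have "-4 < (\<gamma>1 - 2 * \<gamma>2) * \<mu>" using \<mu> by (simp add: field_simps)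
  then show "0 < \<gamma>1 * \<mu> \<and> \<gamma>1 * \<mu> < \<gamma>2 * \<mu> \<and> 2 * (\<gamma>2 * \<mu>) - \<gamma>1 * \<mu> < 4"
    using \<gamma> \<mu> by (simp add: algebra_simps)
qed

lemma lyapunov_decrease_robust:
  fixes f :: "'a::real_inner \<Rightarrow> 'a" and V :: "'a \<Rightarrow> 'a \<Rightarrow> real"
  assumes c: "c > 0" and K: "K \<ge> 0" and M: "M \<ge> 0" and \<gamma>: "\<gamma>1 \<ge> 0" "\<gamma>2 \<ge> 0"
    and bounded: "\<And>x. norm (f x) \<le> M * norm x"
    and nominal: "\<And>p v. p \<in> S \<Longrightarrow> v \<in> S \<Longrightarrow>
      V (p + v) (v - \<gamma>1 *\<^sub>R f p - \<gamma>2 *\<^sub>R f v) \<le> V p v - c * (p \<bullet> p + v \<bullet> v)"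
    and perturb: "\<And>p v e. \<bar>V p (v + e) - V p v\<bar> \<le> K * (norm e * (norm p + norm v + norm e))"
  shows "\<exists>\<epsilon>>0. \<forall>g p v. (\<forall>x. norm (g x - f x) \<le> \<epsilon> * norm x) \<longrightarrow> p \<in> S \<longrightarrow> v \<in> S \<longrightarrow>
    V (p + v) (v - \<gamma>1 *\<^sub>R g p - \<gamma>2 *\<^sub>R g v) \<le> V p v - c / 2 * (p \<bullet> p + v \<bullet> v)"
proof -
  define G where "G = \<gamma>1 + \<gamma>2"
  define R where "R = 2 + G * M + G"
  have GR: "G \<ge> 0" "R \<ge> 0" "K * G * R \<ge> 0" using \<gamma> M K by (simp_all add: G_def R_def)
  define \<epsilon> where "\<epsilon> = min 1 (c / (4 * (K * G * R + 1)))"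
  have \<epsilon>: "\<epsilon> > 0" "\<epsilon> \<le> 1" using c GR by (simp_all add: \<epsilon>_def)
  have "\<epsilon> \<le> c / (4 * (K * G * R + 1))" by (simp add: \<epsilon>_def)
  then have "\<epsilon> * (4 * (K * G * R + 1)) \<le> c" using GR by (simp add: le_divide_eq)
  then have small: "\<epsilon> * (K * G * R) \<le> c / 4" using \<epsilon> by (simp add: algebra_simps)
  have "V (p + v) (v - \<gamma>1 *\<^sub>R g p - \<gamma>2 *\<^sub>R g v) \<le> V p v - c / 2 * (p \<bullet> p + v \<bullet> v)"
    if close: "\<forall>x. norm (g x - f x) \<le> \<epsilon> * norm x" and S: "p \<in> S" "v \<in> S" for g p v
  proof -
    define s where "s = norm p + norm v"
    define v' where "v' = v - \<gamma>1 *\<^sub>R f p - \<gamma>2 *\<^sub>R f v"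
    define e where "e = - (\<gamma>1 *\<^sub>R (g p - f p)) - \<gamma>2 *\<^sub>R (g v - f v)"
    have s: "s \<ge> 0" by (simp add: s_def)
    have split: "v - \<gamma>1 *\<^sub>R g p - \<gamma>2 *\<^sub>R g v = v' + e"
      by (simp add: v'_def e_def algebra_simps)
    have "norm e \<le> \<gamma>1 * norm (g p - f p) + \<gamma>2 * norm (g v - f v)"
      unfolding e_def using norm_triangle_ineq4[of "- (\<gamma>1 *\<^sub>R (g p - f p))" "\<gamma>2 *\<^sub>R (g v - f v)"] \<gamma>
      by simp
    also have "\<dots> \<le> \<gamma>1 * (\<epsilon> * norm p) + \<gamma>2 * (\<epsilon> * norm v)"
      using close \<gamma> by (intro add_mono mult_left_mono) auto
    also have "\<dots> \<le> \<epsilon> * G * s" unfolding G_def s_def using \<gamma> \<epsilon> by (simp add: algebra_simps)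
    finally have ne: "norm e \<le> \<epsilon> * G * s" .
    have "norm v' \<le> norm v + \<gamma>1 * norm (f p) + \<gamma>2 * norm (f v)"
      unfolding v'_def using norm_triangle_ineq4[of "v - \<gamma>1 *\<^sub>R f p" "\<gamma>2 *\<^sub>R f v"]
        norm_triangle_ineq4[of v "\<gamma>1 *\<^sub>R f p"] \<gamma> by simp
    also have "\<dots> \<le> norm v + \<gamma>1 * (M * norm p) + \<gamma>2 * (M * norm v)"
      using bounded \<gamma> by (intro add_mono mult_left_mono) auto
    also have "\<dots> \<le> (1 + G * M) * s" unfolding G_def s_def using \<gamma> M by (simp add: algebra_simps)
    finally have nv': "norm v' \<le> (1 + G * M) * s" .
    have "\<epsilon> * G * s \<le> G * s" using mult_right_mono[OF \<epsilon>(2), of "G * s"] GR s by (simp add: mult.assoc)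
    then have total: "norm (p + v) + norm v' + norm e \<le> R * s"
      using norm_triangle_ineq[of p v] ne nv' unfolding R_def s_def by (simp add: algebra_simps)
    have "\<bar>V (p + v) (v' + e) - V (p + v) v'\<bar> \<le> K * (norm e * (norm (p + v) + norm v' + norm e))"
      by (rule perturb)
    also have "\<dots> \<le> K * ((\<epsilon> * G * s) * (R * s))"
      using ne total K \<epsilon>(1) GR(1) s by (intro mult_left_mono mult_mono) auto
    also have "\<dots> = \<epsilon> * (K * G * R) * s^2" by (simp add: power2_eq_square algebra_simps)
    also have "\<dots> \<le> c / 4 * s^2" using small by (intro mult_right_mono) auto
    also have "\<dots> \<le> c / 2 * (p \<bullet> p + v \<bullet> v)"
    proof -
      have "s^2 \<le> 2 * ((norm p)^2 + (norm v)^2)"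
        unfolding s_def using sum_squares_ge_zero[of "norm p - norm v" 0]
        by (simp add: power2_eq_square algebra_simps)
      then show ?thesis using c by (simp add: power2_norm_eq_inner)
    qed
    finally show ?thesis using nominal[OF S] unfolding split v'_def by linarith
  qed
  then show ?thesis using \<epsilon>(1) by blast
qed

lemma nonneg_descent_tendsto_zero:
  fixes V s :: "nat \<Rightarrow> real"
  assumes V: "\<And>k. 0 \<le> V k" and c: "c > 0" and s: "\<And>k. 0 \<le> s k"
    and descent: "\<And>k. V (Suc k) \<le> V k - c * s k"
  shows "s \<longlonglongrightarrow> 0"
proof -
  have telescope: "V m + c * (\<Sum>k<m. s k) \<le> V 0" for m
  proof (induction m)
    case (Suc m)
    then show ?case using descent[of m] by (simp add: algebra_simps)
  qed simp
  have "(\<Sum>k<m. s k) \<le> V 0 / c" for m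
    using telescope[of m] V[of m] c by (simp add: field_simps)
  then have "summable s" by (rule summableI_nonneg_bounded[OF s])
  then show ?thesis by (rule summable_LIMSEQ_zero)
qed

lemma tendsto_zero_if_inner_self_sum:
  fixes x y :: "nat \<Rightarrow> 'a::real_inner"
  assumes "(\<lambda>k. x k \<bullet> x k + y k \<bullet> y k) \<longlonglongrightarrow> 0"
  shows "x \<longlonglongrightarrow> 0"
proof (rule Lim_null_comparison)
  show "(\<lambda>k. sqrt (x k \<bullet> x k + y k \<bullet> y k)) \<longlonglongrightarrow> 0"
    using tendsto_real_sqrt[OF assms] by simp
  have "norm (x k) \<le> sqrt (x k \<bullet> x k + y k \<bullet> y k)" for k
    unfolding norm_eq_sqrt_inner by (simp add: real_sqrt_le_mono)
  then show "\<forall>\<^sub>F k in sequentially. norm (x k) \<le> sqrt (x k \<bullet> x k + y k \<bullet> y k)"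
    by (intro always_eventually) auto
qed

lemma consensus_if_center_tendsto_zero:
  fixes x :: "nat \<Rightarrow> real^'n"
  assumes "(\<lambda>k. center (x k)) \<longlonglongrightarrow> 0"
  shows "(\<lambda>k. x k $ i - x k $ j) \<longlonglongrightarrow> 0"
proof -
  have "(\<lambda>k. center (x k) $ i - center (x k) $ j) \<longlonglongrightarrow> 0 $ i - 0 $ j"
    using assms by (intro tendsto_intros)
  then show ?thesis by (simp add: center_diff_component)
qed

lemma consensus_if_lyapunov_decrease:
  fixes p v :: "nat \<Rightarrow> real^'n" and V :: "real^'n \<Rightarrow> real^'n \<Rightarrow> real"
  assumes V: "\<And>p v. 0 \<le> V p v" and c: "c > 0"
    and decrease: "\<And>k. V (center (p (Suc k))) (center (v (Suc k)))
      \<le> V (center (p k)) (center (v k)) - c * (center (p k) \<bullet> center (p k) + center (v k) \<bullet> center (v k))"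
  shows "(\<lambda>k. p k $ i - p k $ j) \<longlonglongrightarrow> 0" and "(\<lambda>k. v k $ i - v k $ j) \<longlonglongrightarrow> 0"
proof -
  have "(\<lambda>k. center (p k) \<bullet> center (p k) + center (v k) \<bullet> center (v k)) \<longlonglongrightarrow> 0"
    using V c decrease
    by (intro nonneg_descent_tendsto_zero[where V = "\<lambda>k. V (center (p k)) (center (v k))"]) auto
  then have "(\<lambda>k. center (p k)) \<longlonglongrightarrow> 0" "(\<lambda>k. center (v k)) \<longlonglongrightarrow> 0"
    using tendsto_zero_if_inner_self_sum[of "\<lambda>k. center (p k)" "\<lambda>k. center (v k)"]
      tendsto_zero_if_inner_self_sum[of "\<lambda>k. center (v k)" "\<lambda>k. center (p k)"]
    by (simp_all add: add.commute)
  then show "(\<lambda>k. p k $ i - p k $ j) \<longlonglongrightarrow> 0" "(\<lambda>k. v k $ i - v k $ j) \<longlonglongrightarrow> 0"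
    by (simp_all add: consensus_if_center_tendsto_zero)
qed

lemma center_closed_loop:
  assumes A: "adj_matrix A"
    and p': "\<forall>i. p' $ i = p $ i + v $ i"
    and v': "\<forall>i. v' $ i = v $ i + \<gamma>1 * (\<Sum>j\<in>UNIV. A $ i $ j * (p $ j - p $ i))
                            + \<gamma>2 * (\<Sum>j\<in>UNIV. A $ i $ j * (v $ j - v $ i))"
  shows "center p' = center p + center v"
    and "center v' = center v - \<gamma>1 *\<^sub>R lap A (center p) - \<gamma>2 *\<^sub>R lap A (center v)"
proof -
  have "p' = p + v" using p' by (simp add: vec_eq_iff)
  then show "center p' = center p + center v" by (simp add: linear_add[OF center_linear])
  have "(\<Sum>j\<in>UNIV. A $ i $ j * (x $ j - x $ i)) = - lap A x $ i" for x i
    by (simp add: lap_def sum_negf[symmetric] algebra_simps)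
  then have "v' = v - \<gamma>1 *\<^sub>R lap A p - \<gamma>2 *\<^sub>R lap A v" using v' by (simp add: vec_eq_iff)
  then show "center v' = center v - \<gamma>1 *\<^sub>R lap A (center p) - \<gamma>2 *\<^sub>R lap A (center v)"
    by (simp add: linear_diff[OF center_linear] linear_scale[OF center_linear] center_lap[OF A]
        lap_center)
qed

theorem theorem1:
  fixes A0 :: "real^'n^'n" and \<gamma>1 \<gamma>2 :: real
  assumes "CARD('n) \<ge> 2"
    and "adj_matrix A0"
    and "graph_connected A0"
    and "\<gamma>2 > \<gamma>1" and "\<gamma>1 > 0"
    and "\<And>\<mu>. is_eigenvalue (laplacian A0) \<mu> \<Longrightarrow> \<mu> \<noteq> 0 \<Longrightarrow> \<gamma>1 - 2 * \<gamma>2 > - 4 / \<mu>"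
  shows "\<exists>\<delta>>0. \<forall>A :: nat \<Rightarrow> real^'n^'n.
           (\<forall>k. adj_matrix (A k) \<and> max_norm (A k - A0) < \<delta>) \<longrightarrow>
           (\<forall>p v :: nat \<Rightarrow> real^'n.
              (\<forall>k i. p (Suc k) $ i = p k $ i + v k $ i) \<longrightarrow>
              (\<forall>k i. v (Suc k) $ i = v k $ i
                 + \<gamma>1 * (\<Sum>j\<in>UNIV. A k $ i $ j * (p k $ j - p k $ i))
                 + \<gamma>2 * (\<Sum>j\<in>UNIV. A k $ i $ j * (v k $ j - v k $ i))) \<longrightarrow>
              (\<forall>i j. (\<lambda>k. p k $ i - p k $ j) \<longlonglongrightarrow> 0 \<and> (\<lambda>k. v k $ i - v k $ j) \<longlonglongrightarrow> 0))"
proof -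
  obtain V c K where c: "c > 0" and K: "K \<ge> 0" and V: "\<And>p v. 0 \<le> V p v"
    and nominal: "\<And>p v. p \<in> zero_sum \<Longrightarrow> v \<in> zero_sum \<Longrightarrow>
      V (p + v) (v - \<gamma>1 *\<^sub>R lap A0 p - \<gamma>2 *\<^sub>R lap A0 v) \<le> V p v - c * (p \<bullet> p + v \<bullet> v)"
    and perturb: "\<And>p v e. \<bar>V p (v + e) - V p v\<bar> \<le> K * (norm e * (norm p + norm v + norm e))"
    using laplacian_consensus_lyapunov[OF assms(2,3,5,4,6)] by blast
  obtain M where M: "M > 0" "\<And>x. norm (lap A0 x) \<le> M * norm x"
    using linear_bounded_pos[OF lap_linear] by blast
  have \<gamma>: "0 \<le> \<gamma>1" "0 \<le> \<gamma>2" using assms(4,5) by linarith+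
  obtain \<epsilon> where \<epsilon>: "\<epsilon> > 0" and robust: "\<And>g p v. \<forall>x. norm (g x - lap A0 x) \<le> \<epsilon> * norm x \<Longrightarrow>
      p \<in> zero_sum \<Longrightarrow> v \<in> zero_sum \<Longrightarrow>
      V (p + v) (v - \<gamma>1 *\<^sub>R g p - \<gamma>2 *\<^sub>R g v) \<le> V p v - c / 2 * (p \<bullet> p + v \<bullet> v)"
    using lyapunov_decrease_robust[OF c K less_imp_le[OF M(1)] \<gamma> M(2) nominal perturb] by blast
  define \<delta> where "\<delta> = \<epsilon> / (2 * real CARD('n)^2)"
  show ?thesis
  proof (intro exI[of _ \<delta>] conjI allI impI)
    show "\<delta> > 0" using \<epsilon> by (simp add: \<delta>_def)
    fix A :: "nat \<Rightarrow> real^'n^'n" and p v :: "nat \<Rightarrow> real^'n" and i j :: 'n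
    assume A: "\<forall>k. adj_matrix (A k) \<and> max_norm (A k - A0) < \<delta>"
      and p: "\<forall>k i. p (Suc k) $ i = p k $ i + v k $ i"
      and v: "\<forall>k i. v (Suc k) $ i = v k $ i
                 + \<gamma>1 * (\<Sum>j\<in>UNIV. A k $ i $ j * (p k $ j - p k $ i))
                 + \<gamma>2 * (\<Sum>j\<in>UNIV. A k $ i $ j * (v k $ j - v k $ i))"
    have close: "\<forall>x. norm (lap (A k) x - lap A0 x) \<le> \<epsilon> * norm x" for k
      using norm_lap_diff_le[of "A k" A0 \<delta>] A by (simp add: \<delta>_def less_imp_le)
    have decrease: "V (center (p (Suc k))) (center (v (Suc k))) \<le> V (center (p k)) (center (v k))
        - c / 2 * (center (p k) \<bullet> center (p k) + center (v k) \<bullet> center (v k))" for k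
      using center_closed_loop[of "A k" "p (Suc k)" "p k" "v k" "v (Suc k)" \<gamma>1 \<gamma>2] A p v
        robust[OF close center_in_zero_sum center_in_zero_sum]
      by simp
    show "(\<lambda>k. p k $ i - p k $ j) \<longlonglongrightarrow> 0" "(\<lambda>k. v k $ i - v k $ j) \<longlonglongrightarrow> 0"
      using consensus_if_lyapunov_decrease[where p = p and v = v, OF V half_gt_zero[OF c] decrease]
      by auto
  qed
qed

end
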